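(* Let $P$ be a flasque pre-meadow with $\mathbf{a}$. Then $P=P_0+0\cdot P$, i.e. $P=\{y+0\cdot z\mid y\in P_0,\ z\in P\}$.
   Context: A pre-meadow is a structure $(P,+,-,\cdot,0,1)$ satisfying: $(x+y)+z=x+(y+z)$, $x+y=y+x$, $x+0=x$, $x+(-x)=0\cdot x$, $(xy)z=x(yz)$, $xy=yx$, $1\cdot x=x$, $x(y+z)=xy+xz$, $-(-x)=x$, $0\cdot(x+y)=0\cdot x\cdot y$. For $z\in 0\cdot P$ put $P_z:=\{x\in P\mid 0\cdot x=z\}$. $P$ is a pre-meadow with $\mathbf{a}$ if there is a unique $z\in 0\cdot P$ with $|P_z|=1$, denoted $\mathbf{a}$, and $x+\mathbf{a}=\mathbf{a}$ for all $x\in P$. Each $P_{0\cdot z}$ is a commutative ring with the induced operations. The set $0\cdot P$ is ordered by $0\cdot z\le 0\cdot w$ iff $0\cdot z\cdot w=0\cdot z$. For $0\cdot z\le 0\cdot w$ the transition map $f_{0\cdot w,0\cdot z}:P_{0\cdot w}\to P_{0\cdot z}$ is the ring homomorphism $x\mapsto x+0\cdot z$. $P$ is flasque if all transition maps are surjective. *)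

theory Defs
  imports Main
begin

definition pre_meadow ::
  "('a \<Rightarrow> 'a \<Rightarrow> 'a) \<Rightarrow> ('a \<Rightarrow> 'a) \<Rightarrow> ('a \<Rightarrow> 'a \<Rightarrow> 'a) \<Rightarrow> 'a \<Rightarrow> 'a \<Rightarrow> bool" where
  "pre_meadow add neg mul zero one \<longleftrightarrow>
     (\<forall>x y z. add (add x y) z = add x (add y z)) \<and>
     (\<forall>x y. add x y = add y x) \<and>
     (\<forall>x. add x zero = x) \<and>
     (\<forall>x. add x (neg x) = mul zero x) \<and>
     (\<forall>x y z. mul (mul x y) z = mul x (mul y z)) \<and>
     (\<forall>x y. mul x y = mul y x) \<and>
     (\<forall>x. mul one x = x) \<and>
     (\<forall>x y z. mul x (add y z) = add (mul x y) (mul x z)) \<and>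
     (\<forall>x. neg (neg x) = x) \<and>
     (\<forall>x y. mul zero (add x y) = mul (mul zero x) y)"

definition zeroP :: "('a \<Rightarrow> 'a \<Rightarrow> 'a) \<Rightarrow> 'a \<Rightarrow> 'a set" where
  "zeroP mul zero = range (mul zero)"

definition Pfib :: "('a \<Rightarrow> 'a \<Rightarrow> 'a) \<Rightarrow> 'a \<Rightarrow> 'a \<Rightarrow> 'a set" where
  "Pfib mul zero z = {x. mul zero x = z}"

definition pm_a :: "('a \<Rightarrow> 'a \<Rightarrow> 'a) \<Rightarrow> 'a \<Rightarrow> 'a" where
  "pm_a mul zero = (THE z. z \<in> zeroP mul zero \<and> card (Pfib mul zero z) = 1)"

definition pre_meadow_with_a ::
  "('a \<Rightarrow> 'a \<Rightarrow> 'a) \<Rightarrow> ('a \<Rightarrow> 'a) \<Rightarrow> ('a \<Rightarrow> 'a \<Rightarrow> 'a) \<Rightarrow> 'a \<Rightarrow> 'a \<Rightarrow> bool" where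
  "pre_meadow_with_a add neg mul zero one \<longleftrightarrow>
     pre_meadow add neg mul zero one \<and>
     (\<exists>!z. z \<in> zeroP mul zero \<and> card (Pfib mul zero z) = 1) \<and>
     (\<forall>x. add x (pm_a mul zero) = pm_a mul zero)"

definition zle :: "('a \<Rightarrow> 'a \<Rightarrow> 'a) \<Rightarrow> 'a \<Rightarrow> 'a \<Rightarrow> 'a \<Rightarrow> bool" where
  "zle mul zero u v \<longleftrightarrow>
     (\<exists>z w. u = mul zero z \<and> v = mul zero w \<and> mul (mul zero z) w = mul zero z)"

definition flasque ::
  "('a \<Rightarrow> 'a \<Rightarrow> 'a) \<Rightarrow> ('a \<Rightarrow> 'a \<Rightarrow> 'a) \<Rightarrow> 'a \<Rightarrow> bool" where
  "flasque add mul zero \<longleftrightarrow>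
     (\<forall>u \<in> zeroP mul zero. \<forall>v \<in> zeroP mul zero. zle mul zero u v \<longrightarrow>
        (\<lambda>x. add x u) ` Pfib mul zero v = Pfib mul zero u)"

end

theory Submission
  imports Defs
begin

text \<open>Since \<open>0 = 0\<cdot>1\<close>, the fibre \<open>P\<^sub>0\<close> is the top of \<open>0\<cdot>P\<close>: \<open>0\<cdot>x \<le> 0\<close> for every \<open>x\<close>.
  Flasqueness makes the transition map \<open>P\<^sub>0 \<rightarrow> P\<^bsub>0\<cdot>x\<^esub>, y \<mapsto> y + 0\<cdot>x\<close> surjective, and
  \<open>x \<in> P\<^bsub>0\<cdot>x\<^esub>\<close>, so \<open>x = y + 0\<cdot>x\<close> with \<open>y \<in> P\<^sub>0\<close>.\<close>

lemma pre_meadow_zero_mul_one: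
  assumes "pre_meadow add neg mul zero one"
  shows "mul zero one = zero"
  using assms unfolding pre_meadow_def by metis

lemma zero_in_zeroP:
  assumes "pre_meadow add neg mul zero one"
  shows "zero \<in> zeroP mul zero"
  using pre_meadow_zero_mul_one[OF assms] unfolding zeroP_def by (metis rangeI)

lemma zle_zero:
  assumes "pre_meadow add neg mul zero one"
  shows "zle mul zero (mul zero x) zero"
proof -
  have "mul (mul zero x) one = mul zero x"
    using assms unfolding pre_meadow_def by metis
  then show ?thesis
    unfolding zle_def using pre_meadow_zero_mul_one[OF assms] by metis
qed

lemma flasque_decompose:
  assumes "pre_meadow add neg mul zero one" and "flasque add mul zero"
  obtains y where "y \<in> Pfib mul zero zero" and "x = add y (mul zero x)"
proof -
  have "mul zero x \<in> zeroP mul zero"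
    by (simp add: zeroP_def)
  then have "(\<lambda>y. add y (mul zero x)) ` Pfib mul zero zero = Pfib mul zero (mul zero x)"
    using assms(2) zero_in_zeroP[OF assms(1)] zle_zero[OF assms(1)]
    unfolding flasque_def by blast
  moreover have "x \<in> Pfib mul zero (mul zero x)"
    by (simp add: Pfib_def)
  ultimately show thesis
    using that by force
qed

theorem proposition3p7:
  fixes add mul :: "'a \<Rightarrow> 'a \<Rightarrow> 'a" and neg :: "'a \<Rightarrow> 'a" and zero one :: 'a
  assumes "pre_meadow_with_a add neg mul zero one"
    and "flasque add mul zero"
  shows "(UNIV :: 'a set) = {add y (mul zero z) | y z. y \<in> Pfib mul zero zero}"
proof -
  have "pre_meadow add neg mul zero one"
    using assms(1) by (simp add: pre_meadow_with_a_def)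
  then have "x \<in> {add y (mul zero z) | y z. y \<in> Pfib mul zero zero}" for x
    using assms(2) by (blast elim: flasque_decompose)
  then show ?thesis
    by blast
qed

end
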